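(* Let $\gamma,\sigma:[a,b]\to V$ be continuous paths of bounded variation. (1) For $\phi(k)=\Gamma(\frac k2+1)$, \[ K_\phi^{\gamma,\sigma}(s,t)=\mathbb{E}_\pi\left[K^{\pi^{1/2}\gamma,\sigma}(s,t)\right]=\mathbb{E}_\pi\left[K^{\gamma,\pi^{1/2}\sigma}(s,t)\right], \] where $\pi\sim\mathrm{Exp}(1)$. (2) For $m>0$ and $\phi(k)=\frac{\Gamma(m+1)\Gamma(k+1)}{\Gamma(k+m+1)}$, \[ K_\phi^{\gamma,\sigma}(s,t)=\mathbb{E}_\pi\left[K^{\pi\gamma,\sigma}(s,t)\right]=\mathbb{E}_\pi\left[K^{\gamma,\pi\sigma}(s,t)\right], \] where $\pi\sim\mathrm{Beta}(1,m)$.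
   Context: $V$ is a finite-dimensional real inner product space, $\langle\cdot,\cdot\rangle_k$ the induced Hilbert–Schmidt inner product on $V^{\otimes k}$. Signature: $S(\gamma)^0=1$, $S(\gamma)^k_{s,t}=\int_{s<u_1<\dots<u_k<t}d\gamma_{u_1}\otimes\cdots\otimes d\gamma_{u_k}$. $K_\phi^{\gamma,\sigma}(s,t)=\sum_{k\ge0}\phi(k)\langle S(\gamma)^k_{a,s},S(\sigma)^k_{a,t}\rangle_k$; $K^{\gamma,\sigma}$ denotes this with $\phi\equiv1$; $c\gamma$ is the pointwise rescaled path. *)

theory Defs
  imports "HOL-Analysis.Analysis" "HOL-Probability.Probability"
begin

definition partition_of :: "real \<Rightarrow> real \<Rightarrow> real list \<Rightarrow> bool" where
  "partition_of a b xs \<longleftrightarrow> xs \<noteq> [] \<and> hd xs = a \<and> last xs = b \<and> sorted_wrt (<) xs"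

definition variation_sum :: "(real \<Rightarrow> 'a::real_normed_vector) \<Rightarrow> real list \<Rightarrow> real" where
  "variation_sum g xs = (\<Sum>j<length xs - 1. norm (g (xs ! Suc j) - g (xs ! j)))"

definition bounded_variation_on :: "real \<Rightarrow> real \<Rightarrow> (real \<Rightarrow> 'a::real_normed_vector) \<Rightarrow> bool" where
  "bounded_variation_on a b g \<longleftrightarrow> (\<exists>B. \<forall>xs. partition_of a b xs \<longrightarrow> variation_sum g xs \<le> B)"

definition has_rs_integral ::
  "(real \<Rightarrow> real) \<Rightarrow> (real \<Rightarrow> real) \<Rightarrow> real \<Rightarrow> real \<Rightarrow> real \<Rightarrow> bool" where
  "has_rs_integral f g a b I \<longleftrightarrow>
     (\<forall>e>0. \<exists>d>0. \<forall>xs tag. partition_of a b xs \<and>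
        (\<forall>j<length xs - 1. xs ! j \<le> tag j \<and> tag j \<le> xs ! Suc j \<and> xs ! Suc j - xs ! j < d)
        \<longrightarrow> \<bar>(\<Sum>j<length xs - 1. f (tag j) * (g (xs ! Suc j) - g (xs ! j))) - I\<bar> < e)"

definition rs_integral :: "(real \<Rightarrow> real) \<Rightarrow> (real \<Rightarrow> real) \<Rightarrow> real \<Rightarrow> real \<Rightarrow> real" where
  "rs_integral f g a b = (THE I. has_rs_integral f g a b I)"

text \<open>V is a finite-dimensional real inner product space ('a::euclidean_space) with
  orthonormal basis Basis; V^{\<otimes>k} is represented by coefficient functions on words
  (lists of basis vectors of length k); the Hilbert--Schmidt inner product is the
  sum of products of coefficients.\<close>

definition words :: "nat \<Rightarrow> 'a::euclidean_space list set" where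
  "words k = {w. length w = k \<and> set w \<subseteq> Basis}"

text \<open>sig_rev \<gamma> a w t is the iterated integral over a<u_1<...<u_n<t of
  d\<gamma>^{i_1}...d\<gamma>^{i_n} where (i_1,...,i_n) = rev w (head of w = last letter).\<close>
fun sig_rev :: "(real \<Rightarrow> 'a::euclidean_space) \<Rightarrow> real \<Rightarrow> 'a list \<Rightarrow> real \<Rightarrow> real" where
  "sig_rev \<gamma> a [] t = 1"
| "sig_rev \<gamma> a (i # w) t = rs_integral (\<lambda>u. sig_rev \<gamma> a w u) (\<lambda>u. \<gamma> u \<bullet> i) a t"

text \<open>Coefficient of e_{i_1}\<otimes>...\<otimes>e_{i_k} in S(\<gamma>)^k_{a,t}, for w = [i_1,...,i_k].\<close>
definition sig_coord :: "(real \<Rightarrow> 'a::euclidean_space) \<Rightarrow> real \<Rightarrow> real \<Rightarrow> 'a list \<Rightarrow> real" where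
  "sig_coord \<gamma> a t w = sig_rev \<gamma> a (rev w) t"

definition tensor_inner :: "nat \<Rightarrow> ('a::euclidean_space list \<Rightarrow> real) \<Rightarrow> ('a list \<Rightarrow> real) \<Rightarrow> real" where
  "tensor_inner k A B = (\<Sum>w\<in>words k. A w * B w)"

definition sig_kernel ::
  "(nat \<Rightarrow> real) \<Rightarrow> (real \<Rightarrow> 'a::euclidean_space) \<Rightarrow> (real \<Rightarrow> 'a) \<Rightarrow> real \<Rightarrow> real \<Rightarrow> real \<Rightarrow> real" where
  "sig_kernel \<phi> \<gamma> \<sigma> a s t = (\<Sum>k. \<phi> k * tensor_inner k (sig_coord \<gamma> a s) (sig_coord \<sigma> a t))"

definition rescale_path :: "real \<Rightarrow> (real \<Rightarrow> 'a::real_vector) \<Rightarrow> real \<Rightarrow> 'a" where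
  "rescale_path c \<gamma> = (\<lambda>u. c *\<^sub>R \<gamma> u)"

definition beta_density :: "real \<Rightarrow> real \<Rightarrow> real \<Rightarrow> real" where
  "beta_density \<alpha> \<beta> x = (if 0 < x \<and> x < 1 then x powr (\<alpha> - 1) * (1 - x) powr (\<beta> - 1) / Beta \<alpha> \<beta> else 0)"

end

theory Submission
  imports Defs
begin

text \<open>Each signature coefficient of order k is homogeneous of degree k in the path, so the kernel
  of the rescaled path c\<gamma> is the power series \<Sum> c^k T(k) with T(k) = \<langle>S(\<gamma>)^k, S(\<sigma>)^k\<rangle>.
  Averaging over a random scale replaces c^k by a moment: E[\<pi>^(k/2)] = \<Gamma>(k/2 + 1) for
  \<pi> \<sim> Exp(1), and E[\<pi>^k] = B(k + 1, m) / B(1, m) for \<pi> \<sim> Beta(1, m). Expectation and series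
  commute because |T(k)| \<le> (d V(\<gamma>) V(\<sigma>))^k / (k!)^2, with V the total variation, while both
  families of moments are at most k!. This factorial decay, like the existence of the iterated
  Riemann--Stieltjes integrals defining the signature, comes from the bound V(u)^(n+1) / (n+1)! for
  the integral of a continuous F with |F| \<le> V^n / n! against any G whose increments are dominated
  by those of V.\<close>

section \<open>Partitions and Riemann--Stieltjes sums\<close>

definition rs_sum :: "(real \<Rightarrow> real) \<Rightarrow> (real \<Rightarrow> real) \<Rightarrow> real list \<Rightarrow> (nat \<Rightarrow> real) \<Rightarrow> real" where
  "rs_sum f g xs \<tau> = (\<Sum>j<length xs - 1. f (\<tau> j) * (g (xs ! Suc j) - g (xs ! j)))"

definition fine_tagged :: "real \<Rightarrow> real list \<Rightarrow> (nat \<Rightarrow> real) \<Rightarrow> bool" where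
  "fine_tagged d xs \<tau> \<longleftrightarrow>
     (\<forall>j<length xs - 1. xs ! j \<le> \<tau> j \<and> \<tau> j \<le> xs ! Suc j \<and> xs ! Suc j - xs ! j < d)"

text \<open>Tags of a near-tagged partition need not lie in their interval, only close to both of its
  endpoints. Unlike the usual tag condition this survives inserting a point into the first
  interval, so two partitions can be compared by peeling off the shorter first interval.\<close>

definition near_tagged :: "real \<Rightarrow> real \<Rightarrow> real \<Rightarrow> real list \<Rightarrow> (nat \<Rightarrow> real) \<Rightarrow> bool" where
  "near_tagged a b \<delta> xs \<tau> \<longleftrightarrow>
     (\<forall>j<length xs - 1. \<tau> j \<in> {a..b} \<and> \<bar>\<tau> j - xs ! j\<bar> < \<delta> \<and> \<bar>\<tau> j - xs ! Suc j\<bar> < \<delta>)"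

definition dominated_increments :: "real \<Rightarrow> real \<Rightarrow> (real \<Rightarrow> real) \<Rightarrow> (real \<Rightarrow> real) \<Rightarrow> bool" where
  "dominated_increments a b G V \<longleftrightarrow> (\<forall>x y. a \<le> x \<longrightarrow> x \<le> y \<longrightarrow> y \<le> b \<longrightarrow> \<bar>G y - G x\<bar> \<le> V y - V x)"

definition uniform_modulus :: "real set \<Rightarrow> (real \<Rightarrow> real) \<Rightarrow> real \<Rightarrow> real \<Rightarrow> bool" where
  "uniform_modulus S F \<delta> \<epsilon> \<longleftrightarrow> (\<forall>x\<in>S. \<forall>y\<in>S. \<bar>x - y\<bar> < \<delta> \<longrightarrow> \<bar>F x - F y\<bar> \<le> \<epsilon>)"

lemma partition_of_nth_bounds:
  assumes "partition_of a b xs" "j < length xs"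
  shows "a \<le> xs ! j" "xs ! j \<le> b"
proof -
  have ne: "xs \<noteq> []" and "hd xs = a" "last xs = b" and sorted: "sorted_wrt (<) xs"
    using assms(1) unfolding partition_of_def by auto
  then have "a = xs ! 0" "b = xs ! (length xs - 1)"
    by (simp_all add: hd_conv_nth last_conv_nth)
  moreover have "xs ! i \<le> xs ! j" if "i \<le> j" "j < length xs" for i j
    using sorted that by (cases "i = j") (auto simp: sorted_wrt_iff_nth_less intro: less_imp_le)
  ultimately show "a \<le> xs ! j" "xs ! j \<le> b"
    using assms(2) by auto
qed

lemma partition_of_imp_le: "partition_of a b xs \<Longrightarrow> a \<le> b"
  using partition_of_nth_bounds[of a b xs 0] by (auto simp: partition_of_def)

lemma partition_of_nth_less:
  "partition_of a b xs \<Longrightarrow> Suc j < length xs \<Longrightarrow> xs ! j < xs ! Suc j"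
  unfolding partition_of_def sorted_wrt_iff_nth_less by auto

lemma partition_of_Cons_Cons_iff:
  "partition_of u v (u' # x # r) \<longleftrightarrow> u' = u \<and> u < x \<and> partition_of x v (x # r)"
  by (auto simp: partition_of_def)

lemma partition_of_cases:
  assumes "partition_of u v xs"
  obtains "xs = [u]" "u = v" | x xr where "xs = u # x # xr"
  using assms by (cases xs rule: remdups_adj.cases) (auto simp: partition_of_def)

lemma partition_of_degenerate:
  assumes "partition_of a a xs" shows "xs = [a]"
proof (cases xs rule: remdups_adj.cases)
  case (3 x y r)
  then have "x < last (y # r)"
    using assms last_in_set[of "y # r"] by (auto simp: partition_of_def simp del: last.simps)
  with assms 3 show ?thesis by (auto simp: partition_of_def)
qed (use assms in \<open>auto simp: partition_of_def\<close>)

lemma partition_of_snoc: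
  assumes "partition_of a x xs" "x < y"
  shows "partition_of a y (xs @ [y])"
proof -
  have "\<forall>z\<in>set xs. z < y"
    using partition_of_nth_bounds(2)[OF assms(1)] assms(2) by (force simp: in_set_conv_nth)
  then show ?thesis
    using assms(1) by (auto simp: partition_of_def sorted_wrt_append)
qed

lemma partition_of_exists:
  assumes "a \<le> b" shows "\<exists>xs. partition_of a b xs"
proof (cases "a = b")
  case True
  then show ?thesis by (auto simp: partition_of_def intro!: exI[of _ "[a]"])
next
  case False
  then show ?thesis using assms by (auto simp: partition_of_def intro!: exI[of _ "[a, b]"])
qed

definition uniform_partition :: "real \<Rightarrow> real \<Rightarrow> nat \<Rightarrow> real list" where
  "uniform_partition u v n = map (\<lambda>j. u + (v - u) * real j / real (Suc n)) [0..<Suc (Suc n)]"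

lemma partition_of_uniform_partition:
  assumes "u < v" shows "partition_of u v (uniform_partition u v n)"
proof -
  have "sorted_wrt (<) (uniform_partition u v n)"
    using assms by (auto simp: uniform_partition_def sorted_wrt_iff_nth_less
        simp del: upt_Suc intro: divide_strict_right_mono)
  then show ?thesis
    by (simp add: partition_of_def uniform_partition_def hd_conv_nth last_conv_nth del: upt_Suc)
qed

lemma uniform_partition_step:
  assumes "j < Suc n"
  shows "uniform_partition u v n ! Suc j - uniform_partition u v n ! j = (v - u) / real (Suc n)"
  using assms by (simp add: uniform_partition_def nth_append diff_divide_distrib[symmetric]
      algebra_simps del: upt_Suc)

lemma fine_tagged_uniform_partition:
  assumes "u \<le> v" "(v - u) / real (Suc n) < d"
  shows "fine_tagged d (uniform_partition u v n) (\<lambda>j. uniform_partition u v n ! j)"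
  unfolding fine_tagged_def
proof (intro allI impI)
  fix j assume "j < length (uniform_partition u v n) - 1"
  then have "uniform_partition u v n ! Suc j - uniform_partition u v n ! j = (v - u) / real (Suc n)"
    by (intro uniform_partition_step) (simp add: uniform_partition_def)
  moreover have "0 \<le> (v - u) / real (Suc n)" using assms(1) by simp
  ultimately show "uniform_partition u v n ! j \<le> uniform_partition u v n ! j \<and>
      uniform_partition u v n ! j \<le> uniform_partition u v n ! Suc j \<and>
      uniform_partition u v n ! Suc j - uniform_partition u v n ! j < d"
    using assms(2) by linarith
qed

lemma eventually_uniform_partition_mesh_less:
  assumes "d > 0" shows "\<forall>\<^sub>F n in sequentially. (v - u) / real (Suc n) < d"
proof -
  have "(\<lambda>n. (v - u) * inverse (real (Suc n))) \<longlonglongrightarrow> 0"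
    by (rule tendsto_mult_right_zero[OF LIMSEQ_inverse_real_of_nat])
  then have "(\<lambda>n. (v - u) / real (Suc n)) \<longlonglongrightarrow> 0"
    by (simp add: divide_inverse)
  then show ?thesis using assms by (rule order_tendstoD)
qed

lemma partition_of_exists_fine:
  assumes "a \<le> b" "d > 0"
  shows "\<exists>xs. partition_of a b xs \<and> fine_tagged d xs (\<lambda>j. xs ! j)"
proof (cases "a = b")
  case True
  then show ?thesis by (auto simp: partition_of_def fine_tagged_def intro!: exI[of _ "[a]"])
next
  case False
  obtain n where "(b - a) / real (Suc n) < d"
    using eventually_uniform_partition_mesh_less[OF assms(2)] by (meson eventually_sequentially order_refl)
  then show ?thesis
    using False assms by (intro exI[of _ "uniform_partition a b n"])
      (simp add: partition_of_uniform_partition fine_tagged_uniform_partition)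
qed

lemma has_rs_integral_iff:
  "has_rs_integral f g a b I \<longleftrightarrow>
     (\<forall>e>0. \<exists>d>0. \<forall>xs \<tau>. partition_of a b xs \<and> fine_tagged d xs \<tau> \<longrightarrow> \<bar>rs_sum f g xs \<tau> - I\<bar> < e)"
  unfolding has_rs_integral_def rs_sum_def fine_tagged_def ..

lemma rs_sum_singleton [simp]: "rs_sum f g [x] \<tau> = 0"
  by (simp add: rs_sum_def)

lemma rs_sum_Cons_Cons:
  "rs_sum f g (x # y # r) \<tau> = f (\<tau> 0) * (g y - g x) + rs_sum f g (y # r) (\<lambda>j. \<tau> (Suc j))"
  unfolding rs_sum_def by (simp add: sum.lessThan_Suc_shift del: sum.lessThan_Suc)

lemma rs_sum_snoc:
  assumes "xs \<noteq> []"
  shows "rs_sum f g (xs @ [y]) \<tau> = rs_sum f g xs \<tau> + f (\<tau> (length xs - 1)) * (g y - g (last xs))"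
proof -
  obtain m where m: "length xs = Suc m" using assms by (cases xs) auto
  have "rs_sum f g (xs @ [y]) \<tau>
      = (\<Sum>j<m. f (\<tau> j) * (g ((xs @ [y]) ! Suc j) - g ((xs @ [y]) ! j))) + f (\<tau> m) * (g y - g (xs ! m))"
    using m by (simp add: rs_sum_def nth_append)
  also have "(\<Sum>j<m. f (\<tau> j) * (g ((xs @ [y]) ! Suc j) - g ((xs @ [y]) ! j))) = rs_sum f g xs \<tau>"
    unfolding rs_sum_def using m by (intro sum.cong) (auto simp: nth_append)
  finally show ?thesis using m assms by (simp add: last_conv_nth)
qed

lemma near_tagged_Cons_Cons_iff:
  "near_tagged a b \<delta> (x # y # r) \<tau> \<longleftrightarrow>
     \<tau> 0 \<in> {a..b} \<and> \<bar>\<tau> 0 - x\<bar> < \<delta> \<and> \<bar>\<tau> 0 - y\<bar> < \<delta> \<and> near_tagged a b \<delta> (y # r) (\<lambda>j. \<tau> (Suc j))"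
  by (auto simp: near_tagged_def less_Suc_eq_0_disj simp del: atLeastAtMost_iff)

lemma near_tagged_if_fine_tagged:
  assumes "partition_of u v xs" "fine_tagged d xs \<tau>" "a \<le> u" "v \<le> b"
  shows "near_tagged a b d xs \<tau>"
  unfolding near_tagged_def
proof (intro allI impI)
  fix j assume j: "j < length xs - 1"
  have "u \<le> xs ! j" "xs ! Suc j \<le> v"
    using partition_of_nth_bounds[OF assms(1)] j by auto
  then show "\<tau> j \<in> {a..b} \<and> \<bar>\<tau> j - xs ! j\<bar> < d \<and> \<bar>\<tau> j - xs ! Suc j\<bar> < d"
    using assms(2-4) j by (auto simp: fine_tagged_def abs_less_iff)
qed

lemma dominated_increments_mono:
  "dominated_increments a b G V \<Longrightarrow> a \<le> a' \<Longrightarrow> b' \<le> b \<Longrightarrow> dominated_increments a' b' G V"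
  by (simp add: dominated_increments_def)

lemma dominated_increments_le:
  "dominated_increments a b G V \<Longrightarrow> a \<le> x \<Longrightarrow> x \<le> y \<Longrightarrow> y \<le> b \<Longrightarrow> V x \<le> V y"
  unfolding dominated_increments_def by (smt (verit) abs_ge_zero)

lemma rs_sum_peel_first:
  assumes "partition_of u v (u # y # r)" "near_tagged a b \<delta> (u # y # r) \<sigma>" "u < x" "x \<le> y"
  obtains ys \<sigma>' where "rs_sum f g (u # y # r) \<sigma> = f (\<sigma> 0) * (g x - g u) + rs_sum f g ys \<sigma>'"
    "partition_of x v ys" "near_tagged a b \<delta> ys \<sigma>'" "length ys \<le> length (u # y # r)"
proof -
  from assms(2) have \<sigma>0: "\<sigma> 0 \<in> {a..b}" "\<bar>\<sigma> 0 - u\<bar> < \<delta>" "\<bar>\<sigma> 0 - y\<bar> < \<delta>"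
    and tail: "near_tagged a b \<delta> (y # r) (\<lambda>j. \<sigma> (Suc j))"
    by (simp_all add: near_tagged_Cons_Cons_iff)
  show ?thesis
  proof (cases "x = y")
    case True
    then show ?thesis
      using assms(1) tail by (intro that[of "y # r" "\<lambda>j. \<sigma> (Suc j)"])
        (auto simp: rs_sum_Cons_Cons partition_of_Cons_Cons_iff)
  next
    case False
    have "\<bar>\<sigma> 0 - x\<bar> < \<delta>"
      using \<sigma>0 assms(3,4) by (simp add: abs_less_iff)
    with \<sigma>0 tail have "near_tagged a b \<delta> (x # y # r) \<sigma>"
      by (simp add: near_tagged_Cons_Cons_iff)
    moreover have "partition_of x v (x # y # r)"
      using assms(1,4) False by (simp add: partition_of_Cons_Cons_iff)
    ultimately show ?thesis
      by (intro that[of "x # y # r" \<sigma>]) (auto simp: rs_sum_Cons_Cons algebra_simps)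
  qed
qed

lemma rs_sum_near_tagged_diff_le:
  assumes modulus: "uniform_modulus {a..b} f (2 * \<delta>) \<epsilon>" and dom: "dominated_increments a b g V"
  shows "partition_of u v xs \<Longrightarrow> partition_of u v ys \<Longrightarrow> a \<le> u \<Longrightarrow> v \<le> b
     \<Longrightarrow> near_tagged a b \<delta> xs \<tau> \<Longrightarrow> near_tagged a b \<delta> ys \<sigma>
     \<Longrightarrow> \<bar>rs_sum f g xs \<tau> - rs_sum f g ys \<sigma>\<bar> \<le> \<epsilon> * (V v - V u)"
proof (induction "length xs + length ys" arbitrary: u xs ys \<tau> \<sigma> rule: less_induct)
  case (less xs ys u \<tau> \<sigma>)
  have peel: "\<bar>rs_sum f g (u # x # xr) \<tau>' - rs_sum f g (u # y # yr) \<sigma>'\<bar> \<le> \<epsilon> * (V v - V u)"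
    if "x \<le> y" "length xr + length yr + 4 = length xs + length ys"
      and px: "partition_of u v (u # x # xr)" and py: "partition_of u v (u # y # yr)"
      and tx: "near_tagged a b \<delta> (u # x # xr) \<tau>'" and ty: "near_tagged a b \<delta> (u # y # yr) \<sigma>'"
    for x xr y yr \<tau>' \<sigma>'
  proof -
    have "u < x" and px': "partition_of x v (x # xr)"
      using px by (auto simp: partition_of_Cons_Cons_iff)
    have \<tau>0: "\<tau>' 0 \<in> {a..b}" "\<bar>\<tau>' 0 - u\<bar> < \<delta>" and tx': "near_tagged a b \<delta> (x # xr) (\<lambda>j. \<tau>' (Suc j))"
      using tx by (auto simp: near_tagged_Cons_Cons_iff simp del: atLeastAtMost_iff)
    have \<sigma>0: "\<sigma>' 0 \<in> {a..b}" "\<bar>\<sigma>' 0 - u\<bar> < \<delta>"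
      using ty by (auto simp: near_tagged_Cons_Cons_iff simp del: atLeastAtMost_iff)
    have "\<bar>f (\<tau>' 0) - f (\<sigma>' 0)\<bar> \<le> \<epsilon>" and "0 \<le> \<epsilon>"
      using modulus \<tau>0 \<sigma>0 unfolding uniform_modulus_def by (force simp: abs_less_iff)+
    moreover have "\<bar>g x - g u\<bar> \<le> V x - V u"
      using dom less.prems(3,4) \<open>u < x\<close> partition_of_imp_le[OF px']
      by (simp add: dominated_increments_def)
    ultimately have first: "\<bar>(f (\<tau>' 0) - f (\<sigma>' 0)) * (g x - g u)\<bar> \<le> \<epsilon> * (V x - V u)"
      unfolding abs_mult by (intro mult_mono) auto
    obtain ys' \<sigma>'' where ys': "rs_sum f g (u # y # yr) \<sigma>' = f (\<sigma>' 0) * (g x - g u) + rs_sum f g ys' \<sigma>''"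
      and "partition_of x v ys'" "near_tagged a b \<delta> ys' \<sigma>''" "length ys' \<le> length (u # y # yr)"
      using rs_sum_peel_first[OF py ty \<open>u < x\<close> \<open>x \<le> y\<close>] by blast
    then have rest: "\<bar>rs_sum f g (x # xr) (\<lambda>j. \<tau>' (Suc j)) - rs_sum f g ys' \<sigma>''\<bar> \<le> \<epsilon> * (V v - V x)"
      using less.hyps[OF _ px' _ _ less.prems(4) tx'] that(2) less.prems(3) \<open>u < x\<close> by auto
    have "rs_sum f g (u # x # xr) \<tau>' - rs_sum f g (u # y # yr) \<sigma>'
        = (f (\<tau>' 0) - f (\<sigma>' 0)) * (g x - g u)
          + (rs_sum f g (x # xr) (\<lambda>j. \<tau>' (Suc j)) - rs_sum f g ys' \<sigma>'')"
      unfolding ys' rs_sum_Cons_Cons[of f g u x xr] by (simp add: algebra_simps)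
    then show ?thesis
      using first rest abs_triangle_ineq[of "(f (\<tau>' 0) - f (\<sigma>' 0)) * (g x - g u)"
          "rs_sum f g (x # xr) (\<lambda>j. \<tau>' (Suc j)) - rs_sum f g ys' \<sigma>''"]
      by (simp add: algebra_simps)
  qed
  show ?case
  proof (cases rule: partition_of_cases[OF less.prems(1)])
    case 1
    then show ?thesis using less.prems(2) by (auto dest!: partition_of_degenerate)
  next
    case xs: (2 x xr)
    show ?thesis
    proof (cases rule: partition_of_cases[OF less.prems(2)])
      case 1
      then show ?thesis using less.prems(1) by (auto dest!: partition_of_degenerate)
    next
      case ys: (2 y yr)
      show ?thesis
      proof (cases "x \<le> y")
        case True
        show ?thesis
          unfolding xs ys by (rule peel[OF True _ less.prems(1,2,5,6)[unfolded xs ys]]) (simp add: xs ys)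
      next
        case False
        have "\<bar>rs_sum f g ys \<sigma> - rs_sum f g xs \<tau>\<bar> \<le> \<epsilon> * (V v - V u)"
          unfolding xs ys
          by (rule peel[OF _ _ less.prems(2,1,6,5)[unfolded xs ys]]) (use False in \<open>simp_all add: xs ys\<close>)
        then show ?thesis by (simp add: abs_minus_commute)
      qed
    qed
  qed
qed

section \<open>The Riemann--Stieltjes integral against a dominated integrator\<close>

lemma continuous_on_Icc_uniform_modulus:
  assumes "continuous_on {a..b} F" "0 \<le> W" "e > 0"
  obtains \<delta> \<epsilon> where "\<delta> > 0" "uniform_modulus {a..b} F (2 * \<delta>) \<epsilon>" "\<epsilon> * W < e"
proof -
  define \<epsilon> where "\<epsilon> = e / (W + 1)"
  have "\<epsilon> > 0" "\<epsilon> * W < e"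
    using assms(2,3) by (simp_all add: \<epsilon>_def field_simps)
  moreover obtain d where "d > 0" "\<forall>x\<in>{a..b}. \<forall>y\<in>{a..b}. dist y x < d \<longrightarrow> dist (F y) (F x) < \<epsilon>"
    using compact_uniformly_continuous[OF assms(1) compact_Icc] \<open>\<epsilon> > 0\<close>
    unfolding uniformly_continuous_on_def by metis
  then have "uniform_modulus {a..b} F (2 * (d / 2)) \<epsilon>"
    by (force simp: uniform_modulus_def dist_real_def)
  ultimately show ?thesis using that[of "d / 2" \<epsilon>] \<open>d > 0\<close> by simp
qed

lemma uniform_modulus_subset:
  "uniform_modulus S F \<delta> \<epsilon> \<Longrightarrow> T \<subseteq> S \<Longrightarrow> uniform_modulus T F \<delta> \<epsilon>"
  by (auto simp: uniform_modulus_def)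

lemma has_rs_integral_unique:
  assumes "a \<le> b" "has_rs_integral F G a b I" "has_rs_integral F G a b J"
  shows "I = J"
proof (rule ccontr)
  assume "I \<noteq> J"
  then have e: "\<bar>I - J\<bar> / 2 > 0" by simp
  obtain d1 where "d1 > 0" and d1: "\<forall>xs \<tau>. partition_of a b xs \<and> fine_tagged d1 xs \<tau> \<longrightarrow>
      \<bar>rs_sum F G xs \<tau> - I\<bar> < \<bar>I - J\<bar> / 2"
    using has_rs_integral_iff[THEN iffD1, rule_format, OF assms(2) e] by blast
  obtain d2 where "d2 > 0" and d2: "\<forall>xs \<tau>. partition_of a b xs \<and> fine_tagged d2 xs \<tau> \<longrightarrow>
      \<bar>rs_sum F G xs \<tau> - J\<bar> < \<bar>I - J\<bar> / 2"
    using has_rs_integral_iff[THEN iffD1, rule_format, OF assms(3) e] by blast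
  obtain xs where xs: "partition_of a b xs" "fine_tagged (min d1 d2) xs (\<lambda>j. xs ! j)"
    using partition_of_exists_fine[OF assms(1), of "min d1 d2"] \<open>d1 > 0\<close> \<open>d2 > 0\<close> by auto
  then have "fine_tagged d1 xs (\<lambda>j. xs ! j)" "fine_tagged d2 xs (\<lambda>j. xs ! j)"
    by (auto simp: fine_tagged_def)
  moreover have False if "\<bar>r - I\<bar> < \<bar>I - J\<bar> / 2" "\<bar>r - J\<bar> < \<bar>I - J\<bar> / 2" for r
    using that \<open>I \<noteq> J\<close> by argo
  ultimately show False
    using xs(1) d1 d2 by blast
qed

lemma rs_integral_eqI:
  "a \<le> b \<Longrightarrow> has_rs_integral F G a b I \<Longrightarrow> rs_integral F G a b = I"
  unfolding rs_integral_def by (rule the_equality) (auto dest: has_rs_integral_unique)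

text \<open>The error of a near-tagged sum is bounded in terms of the modulus of continuity of F and the
  increment of V alone; this uniformity is what makes the indefinite integral continuous in its
  upper limit.\<close>

definition near_tagged_limit ::
  "(real \<Rightarrow> real) \<Rightarrow> (real \<Rightarrow> real) \<Rightarrow> (real \<Rightarrow> real) \<Rightarrow> real \<Rightarrow> real \<Rightarrow> real \<Rightarrow> bool" where
  "near_tagged_limit F G V a u I \<longleftrightarrow>
     (\<forall>\<delta> \<epsilon> xs \<tau>. \<delta> > 0 \<longrightarrow> uniform_modulus {a..u} F (2 * \<delta>) \<epsilon> \<longrightarrow> partition_of a u xs \<longrightarrow>
        near_tagged a u \<delta> xs \<tau> \<longrightarrow> \<bar>rs_sum F G xs \<tau> - I\<bar> \<le> \<epsilon> * (V u - V a))"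

lemma eventually_near_tagged_uniform_partition:
  assumes "a < u" "\<delta> > 0"
  shows "\<forall>\<^sub>F n in sequentially. near_tagged a u \<delta> (uniform_partition a u n) (\<lambda>j. uniform_partition a u n ! j)"
  using eventually_uniform_partition_mesh_less[OF assms(2), of u a]
proof eventually_elim
  case (elim n)
  with assms(1) show ?case
    by (intro near_tagged_if_fine_tagged[OF partition_of_uniform_partition fine_tagged_uniform_partition])
      auto
qed

lemma near_tagged_limit_exists:
  assumes "a \<le> u" and cont: "continuous_on {a..u} F" and dom: "dominated_increments a u G V"
  shows "\<exists>I. near_tagged_limit F G V a u I"
proof (cases "a = u")
  case True
  then show ?thesis
    by (auto simp: near_tagged_limit_def intro!: exI[of _ 0] dest!: partition_of_degenerate)
next
  case False
  then have "a < u" using assms(1) by simp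
  define W where "W = V u - V a"
  have "0 \<le> W" using dominated_increments_le[OF dom] assms(1) by (simp add: W_def)
  define P where "P n = uniform_partition a u n" for n
  define S where "S n = rs_sum F G (P n) (\<lambda>j. P n ! j)" for n
  have P: "partition_of a u (P n)" for n
    unfolding P_def using \<open>a < u\<close> by (rule partition_of_uniform_partition)
  have close: "\<forall>\<^sub>F n in sequentially. \<bar>rs_sum F G xs \<tau> - S n\<bar> \<le> \<epsilon> * W"
    if "\<delta> > 0" "uniform_modulus {a..u} F (2 * \<delta>) \<epsilon>" "partition_of a u xs" "near_tagged a u \<delta> xs \<tau>"
    for \<delta> \<epsilon> xs \<tau>
    using eventually_near_tagged_uniform_partition[OF \<open>a < u\<close> \<open>\<delta> > 0\<close>]
    by eventually_elim
      (use that P in \<open>auto simp: S_def W_def P_def intro: rs_sum_near_tagged_diff_le[OF _ dom]\<close>)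
  have "Cauchy S"
  proof (rule metric_CauchyI)
    fix e :: real assume "e > 0"
    then obtain \<delta> \<epsilon> where \<delta>: "\<delta> > 0" "uniform_modulus {a..u} F (2 * \<delta>) \<epsilon>" "\<epsilon> * W < e"
      using continuous_on_Icc_uniform_modulus[OF cont \<open>0 \<le> W\<close>] by blast
    obtain N where "\<And>m. m \<ge> N \<Longrightarrow> near_tagged a u \<delta> (P m) (\<lambda>j. P m ! j)"
      using eventually_near_tagged_uniform_partition[OF \<open>a < u\<close> \<delta>(1)]
      unfolding eventually_sequentially P_def by blast
    then have "dist (S m) (S n) \<le> \<epsilon> * W" if "m \<ge> N" "n \<ge> N" for m n
      unfolding S_def dist_real_def W_def using that P \<delta>
      by (intro rs_sum_near_tagged_diff_le[OF _ dom]) auto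
    then show "\<exists>M. \<forall>m\<ge>M. \<forall>n\<ge>M. dist (S m) (S n) < e"
      using \<delta>(3) by (meson order.strict_trans1)
  qed
  then obtain I where "S \<longlonglongrightarrow> I"
    using Cauchy_convergent_iff convergent_def by blast
  have "\<bar>rs_sum F G xs \<tau> - I\<bar> \<le> \<epsilon> * W"
    if "\<delta> > 0" "uniform_modulus {a..u} F (2 * \<delta>) \<epsilon>" "partition_of a u xs" "near_tagged a u \<delta> xs \<tau>"
    for \<delta> \<epsilon> xs \<tau>
    using close[OF that]
    by (intro tendsto_upperbound[OF tendsto_rabs[OF tendsto_diff[OF tendsto_const \<open>S \<longlonglongrightarrow> I\<close>]]]) auto
  then show ?thesis
    unfolding near_tagged_limit_def W_def by blast
qed

lemma has_rs_integral_if_near_tagged_limit: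
  assumes "a \<le> u" "continuous_on {a..u} F" "dominated_increments a u G V"
    and "near_tagged_limit F G V a u I"
  shows "has_rs_integral F G a u I"
  unfolding has_rs_integral_iff
proof (intro allI impI)
  fix e :: real assume "e > 0"
  moreover have "0 \<le> V u - V a" using dominated_increments_le[OF assms(3)] assms(1) by simp
  ultimately obtain \<delta> \<epsilon> where \<delta>: "\<delta> > 0" "uniform_modulus {a..u} F (2 * \<delta>) \<epsilon>" "\<epsilon> * (V u - V a) < e"
    using continuous_on_Icc_uniform_modulus[OF assms(2)] by blast
  have "\<bar>rs_sum F G xs \<tau> - I\<bar> < e" if "partition_of a u xs" "fine_tagged \<delta> xs \<tau>" for xs \<tau>
    using assms(4) \<delta> that near_tagged_if_fine_tagged[OF that]
    unfolding near_tagged_limit_def by fastforce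
  then show "\<exists>d>0. \<forall>xs \<tau>. partition_of a u xs \<and> fine_tagged d xs \<tau> \<longrightarrow> \<bar>rs_sum F G xs \<tau> - I\<bar> < e"
    using \<delta>(1) by blast
qed

context
  fixes F G V :: "real \<Rightarrow> real" and a u :: real
  assumes a_le_u: "a \<le> u" and continuous_F: "continuous_on {a..u} F"
    and dominated_G: "dominated_increments a u G V"
begin

lemma near_tagged_limit_rs_integral: "near_tagged_limit F G V a u (rs_integral F G a u)"
proof -
  obtain I where "near_tagged_limit F G V a u I"
    using near_tagged_limit_exists[OF a_le_u continuous_F dominated_G] by blast
  moreover from has_rs_integral_if_near_tagged_limit[OF a_le_u continuous_F dominated_G this]
  have "rs_integral F G a u = I" by (rule rs_integral_eqI[OF a_le_u])
  ultimately show ?thesis by simp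
qed

lemma has_rs_integral_rs_integral: "has_rs_integral F G a u (rs_integral F G a u)"
  by (rule has_rs_integral_if_near_tagged_limit[OF a_le_u continuous_F dominated_G
        near_tagged_limit_rs_integral])

end

lemma rs_sum_fine_tagged_approx:
  assumes "a \<le> v" "v \<le> b" "continuous_on {a..b} F" "dominated_increments a b G V"
    and "\<delta> > 0" "uniform_modulus {a..b} F (2 * \<delta>) \<epsilon>" "partition_of a v xs" "fine_tagged \<delta> xs \<tau>"
  shows "\<bar>rs_sum F G xs \<tau> - rs_integral F G a v\<bar> \<le> \<epsilon> * (V v - V a)"
  using near_tagged_limit_rs_integral[of a v F G V] assms
    continuous_on_subset[OF assms(3)] dominated_increments_mono[OF assms(4)]
    uniform_modulus_subset[OF assms(6)] near_tagged_if_fine_tagged[OF assms(7,8)]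
  unfolding near_tagged_limit_def by force

lemma rs_integral_increment_le:
  assumes u: "a \<le> u1" "u1 \<le> u2" "u2 \<le> b" "u2 - u1 < \<delta>"
    and cont: "continuous_on {a..b} F" and dom: "dominated_increments a b G V"
    and "\<delta> > 0" and modulus: "uniform_modulus {a..b} F (2 * \<delta>) \<epsilon>" and M: "\<forall>x\<in>{a..b}. \<bar>F x\<bar> \<le> M"
  shows "\<bar>rs_integral F G a u2 - rs_integral F G a u1\<bar> \<le> 2 * \<epsilon> * (V b - V a) + M * \<bar>G u2 - G u1\<bar>"
proof -
  have "0 \<le> \<epsilon>" using modulus[unfolded uniform_modulus_def, rule_format, of a a] u \<open>\<delta> > 0\<close> by simp
  have approx: "\<bar>rs_sum F G xs \<tau> - rs_integral F G a v\<bar> \<le> \<epsilon> * (V b - V a)"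
    if "a \<le> v" "v \<le> b" "partition_of a v xs" "fine_tagged \<delta> xs \<tau>" for v xs \<tau>
    using rs_sum_fine_tagged_approx[OF that(1,2) cont dom \<open>\<delta> > 0\<close> modulus that(3,4)]
      dominated_increments_le[OF dom, of v b] that \<open>0 \<le> \<epsilon>\<close>
    by (smt (verit) mult_left_mono)
  show ?thesis
  proof (cases "u1 = u2")
    case True
    have "0 \<le> V b - V a" using dominated_increments_le[OF dom] u by simp
    then show ?thesis using True \<open>0 \<le> \<epsilon>\<close> M u by (force intro: order_trans[OF abs_ge_zero])
  next
    case False
    txt \<open>Appending u2 to a fine partition of [a, u1] changes the sum by F u1 (G u2 - G u1).\<close>
    obtain xs where xs: "partition_of a u1 xs" "fine_tagged \<delta> xs (\<lambda>j. xs ! j)"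
      using partition_of_exists_fine[OF u(1) \<open>\<delta> > 0\<close>] by blast
    define ys where "ys = xs @ [u2]"
    have "xs \<noteq> []" "last xs = u1" using xs(1) by (auto simp: partition_of_def)
    then have last: "xs ! (length xs - 1) = u1" by (simp add: last_conv_nth)
    have ys: "partition_of a u2 ys" unfolding ys_def using xs(1) False u by (intro partition_of_snoc) auto
    have "fine_tagged \<delta> xs (\<lambda>j. ys ! j)"
      using xs(2) by (auto simp: fine_tagged_def ys_def nth_append)
    then have "\<bar>rs_sum F G xs (\<lambda>j. ys ! j) - rs_integral F G a u1\<bar> \<le> \<epsilon> * (V b - V a)"
      using approx[OF u(1) _ xs(1)] u by simp
    moreover have "fine_tagged \<delta> ys (\<lambda>j. ys ! j)"
      using xs(2) last \<open>xs \<noteq> []\<close> u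
      by (auto simp: fine_tagged_def ys_def nth_append less_Suc_eq not_less_eq)
    then have "\<bar>rs_sum F G ys (\<lambda>j. ys ! j) - rs_integral F G a u2\<bar> \<le> \<epsilon> * (V b - V a)"
      using approx[OF _ u(3) ys] u by simp
    moreover have "rs_sum F G ys (\<lambda>j. ys ! j) - rs_sum F G xs (\<lambda>j. ys ! j) = F u1 * (G u2 - G u1)"
      using rs_sum_snoc[OF \<open>xs \<noteq> []\<close>] \<open>last xs = u1\<close> \<open>xs \<noteq> []\<close> last
      by (simp add: ys_def nth_append)
    moreover have "\<bar>F u1 * (G u2 - G u1)\<bar> \<le> M * \<bar>G u2 - G u1\<bar>"
      unfolding abs_mult using M u by (intro mult_right_mono) auto
    ultimately show ?thesis
      unfolding abs_le_iff by linarith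
  qed
qed

lemma continuous_on_rs_integral:
  assumes "a \<le> b" and cont_F: "continuous_on {a..b} F" and cont_G: "continuous_on {a..b} G"
    and dom: "dominated_increments a b G V"
  shows "continuous_on {a..b} (\<lambda>u. rs_integral F G a u)"
  unfolding continuous_on_iff
proof (intro ballI allI impI)
  fix u0 e :: real assume "u0 \<in> {a..b}" "0 < e"
  obtain M where "M \<ge> 0" and M: "\<forall>x\<in>{a..b}. \<bar>F x\<bar> \<le> M"
    using continuous_on_compact_bound[OF compact_Icc cont_F] by (metis real_norm_def)
  have "0 \<le> V b - V a" using dominated_increments_le[OF dom] assms(1) by simp
  then obtain \<delta> \<epsilon> where \<delta>: "\<delta> > 0" "uniform_modulus {a..b} F (2 * \<delta>) \<epsilon>" "\<epsilon> * (V b - V a) < e / 4"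
    using continuous_on_Icc_uniform_modulus[OF cont_F, of "V b - V a" "e / 4"] \<open>0 < e\<close> by auto
  define \<eta> where "\<eta> = e / (4 * (M + 1))"
  have "M * \<eta> < e / 4"
    using \<open>M \<ge> 0\<close> \<open>0 < e\<close> by (simp add: \<eta>_def field_simps)
  obtain d where "d > 0" and d: "\<forall>x\<in>{a..b}. dist x u0 < d \<longrightarrow> dist (G x) (G u0) < \<eta>"
    using cont_G \<open>u0 \<in> {a..b}\<close> \<open>0 < e\<close> \<open>M \<ge> 0\<close> unfolding continuous_on_iff \<eta>_def
    by (metis add_nonneg_pos divide_pos_pos mult_pos_pos zero_less_numeral zero_less_one)
  have close: "\<bar>rs_integral F G a y - rs_integral F G a x\<bar> < e"
    if "x \<in> {a..b}" "y \<in> {a..b}" "x \<le> y" "y - x < \<delta>" "\<bar>G y - G x\<bar> < \<eta>" for x y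
  proof -
    have "\<bar>rs_integral F G a y - rs_integral F G a x\<bar> \<le> 2 * \<epsilon> * (V b - V a) + M * \<bar>G y - G x\<bar>"
      using that by (intro rs_integral_increment_le[OF _ _ _ _ cont_F dom \<delta>(1,2) M]) auto
    also have "\<dots> \<le> 2 * \<epsilon> * (V b - V a) + M * \<eta>"
      using that(5) \<open>M \<ge> 0\<close> by (simp add: mult_left_mono)
    finally show ?thesis using \<delta>(3) \<open>M * \<eta> < e / 4\<close> by linarith
  qed
  show "\<exists>d>0. \<forall>u\<in>{a..b}. dist u u0 < d \<longrightarrow> dist (rs_integral F G a u) (rs_integral F G a u0) < e"
  proof (intro exI[of _ "min \<delta> d"] conjI ballI impI)
    fix u assume u: "u \<in> {a..b}" "dist u u0 < min \<delta> d"
    then have "\<bar>G u - G u0\<bar> < \<eta>" using d by (simp add: dist_real_def)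
    then show "dist (rs_integral F G a u) (rs_integral F G a u0) < e"
      using close[of u u0] close[of u0 u] u \<open>u0 \<in> {a..b}\<close>
      by (cases "u \<le> u0") (auto simp: dist_real_def abs_minus_commute)
  qed (use \<delta>(1) \<open>d > 0\<close> in simp)
qed

lemma power_div_fact_increment_le:
  fixes x y :: real
  assumes "0 \<le> x" "x \<le> y"
  shows "x ^ n / fact n * (y - x) \<le> (y ^ Suc n - x ^ Suc n) / fact (Suc n)"
proof -
  have "(\<Sum>i<Suc n. x ^ n) \<le> (\<Sum>i<Suc n. x ^ (n - i) * y ^ i)"
  proof (intro sum_mono)
    fix i assume "i \<in> {..<Suc n}"
    then have "x ^ n = x ^ (n - i) * x ^ i" by (simp add: power_add[symmetric])
    also have "\<dots> \<le> x ^ (n - i) * y ^ i"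
      using assms by (intro mult_left_mono power_mono) auto
    finally show "x ^ n \<le> x ^ (n - i) * y ^ i" .
  qed
  then have "real (Suc n) * x ^ n * (y - x) \<le> y ^ Suc n - x ^ Suc n"
    using assms power_diff_sumr2[of y "Suc n" x] by (simp add: mult.commute mult_left_mono)
  then have "x ^ n * (y - x) \<le> (y ^ Suc n - x ^ Suc n) / real (Suc n)"
    by (simp add: field_simps)
  then have "x ^ n * (y - x) / fact n \<le> (y ^ Suc n - x ^ Suc n) / real (Suc n) / fact n"
    by (intro divide_right_mono) auto
  then show ?thesis
    by (simp add: fact_Suc divide_divide_eq_left)
qed

lemma abs_rs_sum_left_tags_le:
  assumes xs: "partition_of a u xs" and dom: "dominated_increments a u G V"
    and V: "\<forall>x\<in>{a..u}. 0 \<le> V x" and F: "\<forall>x\<in>{a..u}. \<bar>F x\<bar> \<le> V x ^ n / fact n"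
  shows "\<bar>rs_sum F G xs (\<lambda>j. xs ! j)\<bar> \<le> V u ^ Suc n / fact (Suc n)"
proof -
  define m where "m = length xs - 1"
  have m: "length xs = Suc m" using xs unfolding m_def partition_of_def by (cases xs) auto
  have bounds: "a \<le> xs ! j" "xs ! j \<le> u" if "j \<le> m" for j
    using partition_of_nth_bounds[OF xs, of j] that m by auto
  have "\<bar>rs_sum F G xs (\<lambda>j. xs ! j)\<bar> \<le> (\<Sum>j<m. \<bar>F (xs ! j) * (G (xs ! Suc j) - G (xs ! j))\<bar>)"
    unfolding rs_sum_def m_def by (rule sum_abs)
  also have "\<dots> \<le> (\<Sum>j<m. (V (xs ! Suc j) ^ Suc n - V (xs ! j) ^ Suc n) / fact (Suc n))"
  proof (intro sum_mono)
    fix j assume "j \<in> {..<m}"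
    then have j: "a \<le> xs ! j" "xs ! j \<le> xs ! Suc j" "xs ! Suc j \<le> u"
      using bounds[of j] bounds[of "Suc j"] partition_of_nth_less[OF xs, of j] m by auto
    then have "\<bar>G (xs ! Suc j) - G (xs ! j)\<bar> \<le> V (xs ! Suc j) - V (xs ! j)"
      using dom by (simp add: dominated_increments_def)
    then have "\<bar>F (xs ! j) * (G (xs ! Suc j) - G (xs ! j))\<bar>
        \<le> V (xs ! j) ^ n / fact n * (V (xs ! Suc j) - V (xs ! j))"
      unfolding abs_mult using F V j by (intro mult_mono) auto
    also have "\<dots> \<le> (V (xs ! Suc j) ^ Suc n - V (xs ! j) ^ Suc n) / fact (Suc n)"
      using V j dominated_increments_le[OF dom, of "xs ! j" "xs ! Suc j"]
      by (intro power_div_fact_increment_le) auto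
    finally show "\<bar>F (xs ! j) * (G (xs ! Suc j) - G (xs ! j))\<bar> \<le> \<dots>" .
  qed
  also have "\<dots> = (V (xs ! m) ^ Suc n - V (xs ! 0) ^ Suc n) / fact (Suc n)"
    unfolding sum_divide_distrib[symmetric] sum_lessThan_telescope[of "\<lambda>j. V (xs ! j) ^ Suc n"] ..
  also have "\<dots> \<le> V u ^ Suc n / fact (Suc n)"
    using xs m V bounds[of 0] unfolding partition_of_def
    by (auto simp: last_conv_nth hd_conv_nth divide_right_mono)
  finally show ?thesis .
qed

lemma has_rs_integral_power_bound:
  assumes "a \<le> u" and I: "has_rs_integral F G a u I" and dom: "dominated_increments a u G V"
    and V: "\<forall>x\<in>{a..u}. 0 \<le> V x" and F: "\<forall>x\<in>{a..u}. \<bar>F x\<bar> \<le> V x ^ n / fact n"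
  shows "\<bar>I\<bar> \<le> V u ^ Suc n / fact (Suc n)"
proof (rule field_le_epsilon)
  fix e :: real assume "e > 0"
  then obtain d where "d > 0" and d: "\<And>xs \<tau>. partition_of a u xs \<Longrightarrow> fine_tagged d xs \<tau> \<Longrightarrow>
      \<bar>rs_sum F G xs \<tau> - I\<bar> < e"
    using I unfolding has_rs_integral_iff by blast
  obtain xs where xs: "partition_of a u xs" "fine_tagged d xs (\<lambda>j. xs ! j)"
    using partition_of_exists_fine[OF assms(1) \<open>d > 0\<close>] by blast
  with abs_rs_sum_left_tags_le[OF xs(1) dom V F] show "\<bar>I\<bar> \<le> V u ^ Suc n / fact (Suc n) + e"
    using d[OF xs] by linarith
qed

lemma has_rs_integral_scale:
  assumes I: "has_rs_integral F G a u I"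
    and F': "\<forall>x\<in>{a..u}. F' x = k * F x" and G': "\<forall>x\<in>{a..u}. G' x = c * G x"
  shows "has_rs_integral F' G' a u (k * c * I)"
  unfolding has_rs_integral_iff
proof (intro allI impI)
  fix e :: real assume "e > 0"
  then have "e / (\<bar>k * c\<bar> + 1) > 0" by simp
  then obtain d where "d > 0" and d: "\<And>xs \<tau>. partition_of a u xs \<Longrightarrow> fine_tagged d xs \<tau> \<Longrightarrow>
      \<bar>rs_sum F G xs \<tau> - I\<bar> < e / (\<bar>k * c\<bar> + 1)"
    using I unfolding has_rs_integral_iff by blast
  have "\<bar>rs_sum F' G' xs \<tau> - k * c * I\<bar> < e" if xs: "partition_of a u xs" "fine_tagged d xs \<tau>" for xs \<tau>
  proof -
    have "rs_sum F' G' xs \<tau> = k * c * rs_sum F G xs \<tau>"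
      unfolding rs_sum_def sum_distrib_left
    proof (intro sum.cong refl)
      fix j assume "j \<in> {..<length xs - 1}"
      then have "xs ! j \<in> {a..u}" "xs ! Suc j \<in> {a..u}" "\<tau> j \<in> {a..u}"
        using partition_of_nth_bounds[OF xs(1), of j] partition_of_nth_bounds[OF xs(1), of "Suc j"] xs(2)
        by (force simp: fine_tagged_def)+
      then show "F' (\<tau> j) * (G' (xs ! Suc j) - G' (xs ! j)) = k * c * (F (\<tau> j) * (G (xs ! Suc j) - G (xs ! j)))"
        using F' G' by (simp add: algebra_simps)
    qed
    then have "\<bar>rs_sum F' G' xs \<tau> - k * c * I\<bar> = \<bar>k * c\<bar> * \<bar>rs_sum F G xs \<tau> - I\<bar>"
      by (simp add: abs_mult[symmetric] algebra_simps)
    also have "\<dots> \<le> \<bar>k * c\<bar> * (e / (\<bar>k * c\<bar> + 1))"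
      using d[OF xs] by (intro mult_left_mono) auto
    also have "\<dots> < e" using \<open>e > 0\<close> by (simp add: field_simps)
    finally show ?thesis .
  qed
  then show "\<exists>d>0. \<forall>xs \<tau>. partition_of a u xs \<and> fine_tagged d xs \<tau> \<longrightarrow> \<bar>rs_sum F' G' xs \<tau> - k * c * I\<bar> < e"
    using \<open>d > 0\<close> by blast
qed

section \<open>Total variation\<close>

definition total_variation :: "(real \<Rightarrow> 'a::real_normed_vector) \<Rightarrow> real \<Rightarrow> real \<Rightarrow> real" where
  "total_variation \<gamma> a x = Sup {variation_sum \<gamma> xs | xs. partition_of a x xs}"

lemma variation_sum_nonneg: "0 \<le> variation_sum \<gamma> xs"
  unfolding variation_sum_def by (intro sum_nonneg) auto

lemma variation_sum_snoc:
  assumes "xs \<noteq> []"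
  shows "variation_sum \<gamma> (xs @ [y]) = variation_sum \<gamma> xs + norm (\<gamma> y - \<gamma> (last xs))"
proof -
  obtain m where m: "length xs = Suc m" using assms by (cases xs) auto
  have "variation_sum \<gamma> (xs @ [y])
      = (\<Sum>j<m. norm (\<gamma> ((xs @ [y]) ! Suc j) - \<gamma> ((xs @ [y]) ! j))) + norm (\<gamma> y - \<gamma> (xs ! m))"
    using m by (simp add: variation_sum_def nth_append)
  also have "(\<Sum>j<m. norm (\<gamma> ((xs @ [y]) ! Suc j) - \<gamma> ((xs @ [y]) ! j))) = variation_sum \<gamma> xs"
    unfolding variation_sum_def using m by (intro sum.cong) (auto simp: nth_append)
  finally show ?thesis using m assms by (simp add: last_conv_nth)
qed

context
  fixes \<gamma> :: "real \<Rightarrow> 'a::real_normed_vector" and a b :: real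
  assumes bv_\<gamma>: "bounded_variation_on a b \<gamma>"
begin

lemma bdd_above_variation_sums:
  assumes "x \<le> b"
  shows "bdd_above {variation_sum \<gamma> xs | xs. partition_of a x xs}"
proof -
  obtain B where B: "\<And>xs. partition_of a b xs \<Longrightarrow> variation_sum \<gamma> xs \<le> B"
    using bv_\<gamma> unfolding bounded_variation_on_def by blast
  have "variation_sum \<gamma> xs \<le> B" if "partition_of a x xs" for xs
  proof (cases "x = b")
    case False
    with assms have "partition_of a b (xs @ [b])" using that by (intro partition_of_snoc) auto
    moreover have "xs \<noteq> []" using that by (simp add: partition_of_def)
    then have "variation_sum \<gamma> xs \<le> variation_sum \<gamma> (xs @ [b])"
      by (simp add: variation_sum_snoc)
    ultimately show ?thesis using B by (meson order.trans)
  qed (use B that in simp)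
  then show ?thesis by (intro bdd_aboveI[of _ B]) blast
qed

lemma variation_sum_le_total_variation:
  "partition_of a x xs \<Longrightarrow> x \<le> b \<Longrightarrow> variation_sum \<gamma> xs \<le> total_variation \<gamma> a x"
  unfolding total_variation_def by (rule cSup_upper) (auto intro: bdd_above_variation_sums)

lemma total_variation_nonneg: "a \<le> x \<Longrightarrow> x \<le> b \<Longrightarrow> 0 \<le> total_variation \<gamma> a x"
  using partition_of_exists variation_sum_le_total_variation variation_sum_nonneg
  by (meson order.trans)

lemma total_variation_increment:
  assumes "a \<le> x" "x \<le> y" "y \<le> b"
  shows "total_variation \<gamma> a x + norm (\<gamma> y - \<gamma> x) \<le> total_variation \<gamma> a y"
proof (cases "x = y")
  case False
  have "variation_sum \<gamma> xs \<le> total_variation \<gamma> a y - norm (\<gamma> y - \<gamma> x)" if "partition_of a x xs" for xs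
  proof -
    have "xs \<noteq> []" "last xs = x" using that by (auto simp: partition_of_def)
    moreover have "partition_of a y (xs @ [y])"
      using that False assms by (intro partition_of_snoc) auto
    ultimately show ?thesis
      using variation_sum_le_total_variation[of y "xs @ [y]"] variation_sum_snoc[of xs \<gamma> y] assms
      by simp
  qed
  then have "total_variation \<gamma> a x \<le> total_variation \<gamma> a y - norm (\<gamma> y - \<gamma> x)"
    unfolding total_variation_def[of \<gamma> a x] using partition_of_exists[OF assms(1)]
    by (intro cSup_least) auto
  then show ?thesis by simp
qed simp

end

lemma dominated_increments_inner_Basis:
  assumes "bounded_variation_on a b \<gamma>" "i \<in> Basis"
  shows "dominated_increments a b (\<lambda>x. \<gamma> x \<bullet> i) (total_variation \<gamma> a)"
  unfolding dominated_increments_def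
proof (intro allI impI)
  fix x y assume "a \<le> x" "x \<le> y" "y \<le> b"
  have "\<bar>\<gamma> y \<bullet> i - \<gamma> x \<bullet> i\<bar> \<le> norm (\<gamma> y - \<gamma> x)"
    using Basis_le_norm[OF assms(2), of "\<gamma> y - \<gamma> x"] by (simp add: inner_diff_left)
  then show "\<bar>\<gamma> y \<bullet> i - \<gamma> x \<bullet> i\<bar> \<le> total_variation \<gamma> a y - total_variation \<gamma> a x"
    using total_variation_increment[OF assms(1) \<open>a \<le> x\<close> \<open>x \<le> y\<close> \<open>y \<le> b\<close>] by simp
qed

section \<open>Signature coefficients\<close>

lemma tensor_inner_commute: "tensor_inner k A B = tensor_inner k B A"
  by (simp add: tensor_inner_def mult.commute)

context
  fixes \<gamma> :: "real \<Rightarrow> 'a::euclidean_space" and a b :: real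
  assumes a_le_b: "a \<le> b" and continuous_\<gamma>: "continuous_on {a..b} \<gamma>"
    and bv_\<gamma>: "bounded_variation_on a b \<gamma>"
begin

lemma continuous_on_sig_rev: "set w \<subseteq> Basis \<Longrightarrow> continuous_on {a..b} (sig_rev \<gamma> a w)"
proof (induction w)
  case (Cons i w)
  have "continuous_on {a..b} (\<lambda>u. rs_integral (sig_rev \<gamma> a w) (\<lambda>x. \<gamma> x \<bullet> i) a u)"
    using Cons continuous_\<gamma> dominated_increments_inner_Basis[OF bv_\<gamma>, of i]
    by (intro continuous_on_rs_integral[OF a_le_b] continuous_intros) auto
  then show ?case by simp
qed simp

lemma has_rs_integral_sig_rev_Cons:
  assumes "i \<in> Basis" "set w \<subseteq> Basis" "u \<in> {a..b}"
  shows "has_rs_integral (sig_rev \<gamma> a w) (\<lambda>x. \<gamma> x \<bullet> i) a u (sig_rev \<gamma> a (i # w) u)"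
proof -
  have "has_rs_integral (sig_rev \<gamma> a w) (\<lambda>x. \<gamma> x \<bullet> i) a u
      (rs_integral (sig_rev \<gamma> a w) (\<lambda>x. \<gamma> x \<bullet> i) a u)"
    using assms continuous_on_subset[OF continuous_on_sig_rev[OF assms(2)]]
      dominated_increments_mono[OF dominated_increments_inner_Basis[OF bv_\<gamma> assms(1)], of a u]
    by (intro has_rs_integral_rs_integral) auto
  then show ?thesis by simp
qed

lemma abs_sig_rev_le:
  "set w \<subseteq> Basis \<Longrightarrow> u \<in> {a..b} \<Longrightarrow>
    \<bar>sig_rev \<gamma> a w u\<bar> \<le> total_variation \<gamma> a u ^ length w / fact (length w)"
proof (induction w arbitrary: u)
  case (Cons i w)
  then have "i \<in> Basis" "set w \<subseteq> Basis" "a \<le> u" "u \<le> b" by auto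
  then have "\<bar>sig_rev \<gamma> a (i # w) u\<bar> \<le> total_variation \<gamma> a u ^ Suc (length w) / fact (Suc (length w))"
    using Cons.IH total_variation_nonneg[OF bv_\<gamma>]
    by (intro has_rs_integral_power_bound[OF _ has_rs_integral_sig_rev_Cons
          dominated_increments_mono[OF dominated_increments_inner_Basis[OF bv_\<gamma>]]]) auto
  then show ?case by simp
qed simp

lemma sig_rev_rescale_path:
  "set w \<subseteq> Basis \<Longrightarrow> u \<in> {a..b} \<Longrightarrow>
    sig_rev (rescale_path c \<gamma>) a w u = c ^ length w * sig_rev \<gamma> a w u"
proof (induction w arbitrary: u)
  case (Cons i w)
  have "has_rs_integral (sig_rev (rescale_path c \<gamma>) a w) (\<lambda>x. rescale_path c \<gamma> x \<bullet> i) a u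
      (c ^ length w * c * sig_rev \<gamma> a (i # w) u)"
    using Cons by (intro has_rs_integral_scale[OF has_rs_integral_sig_rev_Cons])
      (auto simp: rescale_path_def)
  then show ?case
    using Cons.prems by (simp add: rs_integral_eqI)
qed simp

lemma abs_sig_coord_le:
  "w \<in> words k \<Longrightarrow> s \<in> {a..b} \<Longrightarrow> \<bar>sig_coord \<gamma> a s w\<bar> \<le> total_variation \<gamma> a s ^ k / fact k"
  using abs_sig_rev_le[of "rev w" s] by (simp add: sig_coord_def words_def)

lemma tensor_inner_sig_coord_rescale_path:
  "s \<in> {a..b} \<Longrightarrow>
    tensor_inner k (sig_coord (rescale_path c \<gamma>) a s) B = c ^ k * tensor_inner k (sig_coord \<gamma> a s) B"
  unfolding tensor_inner_def sum_distrib_left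
  by (intro sum.cong refl) (simp add: sig_coord_def sig_rev_rescale_path words_def)

lemma sig_kernel_rescale_path_left:
  "s \<in> {a..b} \<Longrightarrow> sig_kernel (\<lambda>_. 1) (rescale_path c \<gamma>) \<rho> a s t = sig_kernel (\<lambda>k. c ^ k) \<gamma> \<rho> a s t"
  unfolding sig_kernel_def
  by (simp add: tensor_inner_sig_coord_rescale_path)

lemma sig_kernel_rescale_path_right:
  "t \<in> {a..b} \<Longrightarrow> sig_kernel (\<lambda>_. 1) \<rho> (rescale_path c \<gamma>) a s t = sig_kernel (\<lambda>k. c ^ k) \<rho> \<gamma> a s t"
  unfolding sig_kernel_def
  by (simp add: tensor_inner_commute[of _ "sig_coord \<rho> a s"]
      tensor_inner_sig_coord_rescale_path)

end

lemma card_words: "card (words k :: 'a::euclidean_space list set) = DIM('a) ^ k"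
  unfolding words_def using card_lists_length_eq[OF finite_Basis, of k] by (simp add: conj_commute)

lemma abs_tensor_inner_le:
  fixes A B :: "'a::euclidean_space list \<Rightarrow> real" and \<alpha> \<beta> :: real
  assumes "\<And>w. w \<in> words k \<Longrightarrow> \<bar>A w\<bar> \<le> \<alpha>" "\<And>w. w \<in> words k \<Longrightarrow> \<bar>B w\<bar> \<le> \<beta>"
  shows "\<bar>tensor_inner k A B\<bar> \<le> real DIM('a) ^ k * (\<alpha> * \<beta>)"
proof -
  have "\<bar>tensor_inner k A B\<bar> \<le> (\<Sum>w\<in>words k. \<bar>A w\<bar> * \<bar>B w\<bar>)"
    unfolding tensor_inner_def abs_mult[symmetric] by (rule sum_abs)
  also have "\<dots> \<le> (\<Sum>w\<in>(words k :: 'a list set). \<alpha> * \<beta>)"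
    using assms by (intro sum_mono mult_mono) (auto intro: order_trans[OF abs_ge_zero])
  finally show ?thesis by (simp add: card_words)
qed

section \<open>Random rescaling\<close>

lemma divide_fact_square_le: "0 \<le> x \<Longrightarrow> x / (fact k)\<^sup>2 \<le> (x / fact k :: real)"
  by (intro divide_left_mono) (auto simp: power2_eq_square fact_ge_1)

lemma integral_suminf_moment_series:
  fixes f :: "'b \<Rightarrow> real"
  assumes [measurable]: "f \<in> borel_measurable M" and "AE p in M. 0 \<le> f p"
    and integrable: "\<And>k. integrable M (\<lambda>p. f p ^ k)" and moments: "\<And>k. (\<integral>p. f p ^ k \<partial>M) \<le> fact k"
    and "0 \<le> C" and T: "\<And>k. \<bar>T k\<bar> \<le> C ^ k / (fact k)\<^sup>2"
  shows "(\<integral>p. (\<Sum>k. f p ^ k * T k) \<partial>M) = (\<Sum>k. (\<integral>p. f p ^ k \<partial>M) * T k)"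
proof -
  have T': "\<bar>T k\<bar> \<le> C ^ k / fact k" for k
    using order_trans[OF T divide_fact_square_le] \<open>0 \<le> C\<close> by simp
  have abs_integral: "(\<integral>p. norm (f p ^ k * T k) \<partial>M) = (\<integral>p. f p ^ k \<partial>M) * \<bar>T k\<bar>" for k
  proof -
    have "AE p in M. norm (f p ^ k * T k) = f p ^ k * \<bar>T k\<bar>"
      using \<open>AE p in M. 0 \<le> f p\<close> by eventually_elim (simp add: abs_mult)
    then have "(\<integral>p. norm (f p ^ k * T k) \<partial>M) = (\<integral>p. f p ^ k * \<bar>T k\<bar> \<partial>M)"
      by (intro integral_cong_AE) auto
    then show ?thesis by simp
  qed
  have "(\<integral>p. (\<Sum>k. f p ^ k * T k) \<partial>M) = (\<Sum>k. (\<integral>p. f p ^ k * T k \<partial>M))"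
  proof (rule integral_suminf)
    show "integrable M (\<lambda>p. f p ^ k * T k)" for k using integrable by simp
    show "AE p in M. summable (\<lambda>k. norm (f p ^ k * T k))"
    proof (intro AE_I2 summable_comparison_test'[OF summable_exp[of "\<bar>f p\<bar> * C" for p], where N = 0])
      fix p k
      have "norm (norm (f p ^ k * T k)) \<le> \<bar>f p\<bar> ^ k * (C ^ k / fact k)"
        unfolding real_norm_def abs_abs abs_mult power_abs by (intro mult_left_mono T') simp
      then show "norm (norm (f p ^ k * T k)) \<le> inverse (fact k) * (\<bar>f p\<bar> * C) ^ k"
        by (simp add: power_mult_distrib field_simps)
    qed
    show "summable (\<lambda>k. \<integral>p. norm (f p ^ k * T k) \<partial>M)"
      unfolding abs_integral
    proof (rule summable_comparison_test'[OF summable_exp[of C], where N = 0])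
      fix k
      have "0 \<le> (\<integral>p. f p ^ k \<partial>M)"
        using \<open>AE p in M. 0 \<le> f p\<close> by (intro integral_nonneg_AE) auto
      then have "norm ((\<integral>p. f p ^ k \<partial>M) * \<bar>T k\<bar>) \<le> fact k * (C ^ k / (fact k)\<^sup>2)"
        unfolding real_norm_def abs_mult abs_abs using moments[of k] T[of k] by (intro mult_mono) auto
      then show "norm ((\<integral>p. f p ^ k \<partial>M) * \<bar>T k\<bar>) \<le> inverse (fact k) * C ^ k"
        by (simp add: power2_eq_square field_simps)
    qed
  qed
  then show ?thesis by simp
qed

lemma density_lborel_moment:
  fixes d g :: "real \<Rightarrow> real"
  assumes [measurable]: "d \<in> borel_measurable borel" "g \<in> borel_measurable borel"
    and "\<And>x. 0 \<le> d x" "\<And>x. 0 \<le> d x * g x" and "((\<lambda>x. d x * g x) has_integral I) UNIV"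
  shows "integrable (density lborel d) g" and "(\<integral>x. g x \<partial>density lborel d) = I"
proof -
  have "integral\<^sup>N lborel (\<lambda>x. d x * g x) = ennreal I"
    using assms(4,5) by (rule nn_integral_has_integral_lborel[rotated]) measurable
  moreover have "0 \<le> I" using has_integral_nonneg[OF assms(5)] assms(4) by simp
  ultimately have "integrable lborel (\<lambda>x. d x * g x)" "(\<integral>x. d x * g x \<partial>lborel) = I"
    using nn_integral_eq_integrable[of "\<lambda>x. d x * g x" lborel I] assms(4) by auto
  then show "integrable (density lborel d) g" "(\<integral>x. g x \<partial>density lborel d) = I"
    using assms(3) by (simp_all add: integrable_density integral_density)
qed

lemma exponential_sqrt_moments:
  shows "integrable (density lborel (exponential_density 1)) (\<lambda>p. sqrt p ^ k)"
    and "(\<integral>p. sqrt p ^ k \<partial>density lborel (exponential_density 1)) = Gamma (real k / 2 + 1)"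
proof -
  have "((\<lambda>x. x powr (real k / 2 + 1 - 1) / exp x) has_integral Gamma (real k / 2 + 1)) {0..}"
    by (rule Gamma_integral_real) (simp add: add_nonneg_pos)
  then have "((\<lambda>x. if x \<in> {0..} then x powr (real k / 2 + 1 - 1) / exp x else 0)
      has_integral Gamma (real k / 2 + 1)) UNIV"
    by (subst has_integral_restrict_UNIV)
  then have "((\<lambda>x. exponential_density 1 x * sqrt x ^ k) has_integral Gamma (real k / 2 + 1)) UNIV"
  proof (rule has_integral_spike[OF negligible_sing[of 0], rotated])
    fix x :: real assume "x \<in> UNIV - {0}"
    then show "exponential_density 1 x * sqrt x ^ k
        = (if x \<in> {0..} then x powr (real k / 2 + 1 - 1) / exp x else 0)"
      by (cases "x < 0")
        (auto simp: exponential_density_def exp_minus field_simps powr_half_sqrt[symmetric]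
          powr_realpow[symmetric] powr_powr)
  qed
  then show "integrable (density lborel (exponential_density 1)) (\<lambda>p. sqrt p ^ k)"
    and "(\<integral>p. sqrt p ^ k \<partial>density lborel (exponential_density 1)) = Gamma (real k / 2 + 1)"
    by (intro density_lborel_moment; simp add: exponential_density_def; measurable)+
qed

lemma beta_moments:
  assumes "m > 0"
  shows "integrable (density lborel (beta_density 1 m)) (\<lambda>p. p ^ k)"
    and "(\<integral>p. p ^ k \<partial>density lborel (beta_density 1 m)) = Beta (real k + 1) m / Beta 1 m"
proof -
  have "((\<lambda>x. x powr (real k + 1 - 1) * (1 - x) powr (m - 1)) has_integral Beta (real k + 1) m)
      {0<..<1}"
    using has_integral_Beta_real[of "real k + 1" m] assms
    by (simp add: has_integral_Icc_iff_Ioo add_nonneg_pos)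
  then have "((\<lambda>x. if x \<in> {0<..<1} then x powr (real k + 1 - 1) * (1 - x) powr (m - 1) else 0)
      has_integral Beta (real k + 1) m) UNIV"
    by (subst has_integral_restrict_UNIV)
  note has_integral_mult_right[OF this, of "1 / Beta 1 m"]
  moreover have "(\<lambda>x. beta_density 1 m x * x ^ k) = (\<lambda>x. 1 / Beta 1 m *
      (if x \<in> {0<..<1} then x powr (real k + 1 - 1) * (1 - x) powr (m - 1) else 0))"
    by (auto simp: fun_eq_iff beta_density_def powr_realpow)
  ultimately have "((\<lambda>x. beta_density 1 m x * x ^ k) has_integral Beta (real k + 1) m / Beta 1 m) UNIV"
    by simp
  then show "integrable (density lborel (beta_density 1 m)) (\<lambda>p. p ^ k)"
    and "(\<integral>p. p ^ k \<partial>density lborel (beta_density 1 m)) = Beta (real k + 1) m / Beta 1 m"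
    using assms by (intro density_lborel_moment; simp add: beta_density_def Beta_def; measurable)+
qed

lemma Beta_ratio_eq_Gamma:
  assumes "m > 0"
  shows "Beta (real k + 1) m / Beta 1 m = Gamma (m + 1) * Gamma (real k + 1) / Gamma (real k + m + 1)"
proof -
  have "real k + 1 + m = real k + m + 1" "1 + m = m + 1" by simp_all
  moreover have "Gamma m > 0" "Gamma (m + 1) > 0" "Gamma (real k + m + 1) > 0" using assms by auto
  ultimately show ?thesis unfolding Beta_def by (simp add: field_simps)
qed

lemma Beta_ratio_le_1:
  assumes "m > 0"
  shows "Beta (real k + 1) m / Beta 1 m \<le> 1"
proof -
  have "Beta (real k + 1) m \<le> Beta 1 m" using assms by (intro Beta_real_mono) auto
  moreover have "Beta 1 m > 0" using assms by (simp add: Beta_def)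
  ultimately show ?thesis by simp
qed

lemma Gamma_half_le_fact: "Gamma (real k / 2 + 1) \<le> fact k"
proof (cases "k = 0")
  case False
  then have "Gamma (real k / 2 + 1) < Gamma (real k + 1)"
    by (intro Gamma_real_strict_mono) auto
  then show ?thesis by (simp add: Gamma_fact add.commute)
qed simp

context
  fixes \<gamma> \<sigma> :: "real \<Rightarrow> 'a::euclidean_space" and a b s t :: real
  assumes a_le_b: "a \<le> b"
    and continuous: "continuous_on {a..b} \<gamma>" "continuous_on {a..b} \<sigma>"
    and bounded_variation: "bounded_variation_on a b \<gamma>" "bounded_variation_on a b \<sigma>"
    and s_t: "s \<in> {a..b}" "t \<in> {a..b}"
begin

lemma abs_tensor_inner_sig_coord_le:
  "\<bar>tensor_inner k (sig_coord \<gamma> a s) (sig_coord \<sigma> a t)\<bar>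
    \<le> (real DIM('a) * total_variation \<gamma> a s * total_variation \<sigma> a t) ^ k / (fact k)\<^sup>2"
proof -
  have "\<bar>tensor_inner k (sig_coord \<gamma> a s) (sig_coord \<sigma> a t)\<bar>
      \<le> real DIM('a) ^ k * (total_variation \<gamma> a s ^ k / fact k * (total_variation \<sigma> a t ^ k / fact k))"
    using a_le_b continuous bounded_variation s_t by (intro abs_tensor_inner_le abs_sig_coord_le)
  then show ?thesis by (simp add: power_mult_distrib power2_eq_square)
qed

lemma sig_kernel_mixture:
  fixes f :: "'b \<Rightarrow> real"
  assumes "f \<in> borel_measurable M" "AE p in M. 0 \<le> f p"
    and "\<And>k. integrable M (\<lambda>p. f p ^ k)" and "\<And>k. (\<integral>p. f p ^ k \<partial>M) \<le> fact k"
  shows "sig_kernel (\<lambda>k. \<integral>p. f p ^ k \<partial>M) \<gamma> \<sigma> a s t = (\<integral>p. sig_kernel (\<lambda>k. f p ^ k) \<gamma> \<sigma> a s t \<partial>M)"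
proof -
  have "0 \<le> total_variation \<gamma> a s" "0 \<le> total_variation \<sigma> a t"
    using bounded_variation s_t by (auto intro: total_variation_nonneg)
  then show ?thesis
    unfolding sig_kernel_def using assms
    by (intro integral_suminf_moment_series[symmetric, where
          C = "real DIM('a) * total_variation \<gamma> a s * total_variation \<sigma> a t"]
        abs_tensor_inner_sig_coord_le) auto
qed

lemma sig_kernel_exponential_mixture:
  "sig_kernel (\<lambda>k. Gamma (real k / 2 + 1)) \<gamma> \<sigma> a s t
    = (\<integral>p. sig_kernel (\<lambda>k. sqrt p ^ k) \<gamma> \<sigma> a s t \<partial>density lborel (exponential_density 1))"
proof -
  have "sig_kernel (\<lambda>k. \<integral>p. sqrt p ^ k \<partial>density lborel (exponential_density 1)) \<gamma> \<sigma> a s t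
      = (\<integral>p. sig_kernel (\<lambda>k. sqrt p ^ k) \<gamma> \<sigma> a s t \<partial>density lborel (exponential_density 1))"
  proof (rule sig_kernel_mixture)
    show "sqrt \<in> borel_measurable (density lborel (exponential_density 1))" by measurable
    show "AE p in density lborel (exponential_density 1). 0 \<le> sqrt p"
      by (subst AE_density) (auto simp: exponential_density_def)
  qed (simp_all add: exponential_sqrt_moments Gamma_half_le_fact)
  then show ?thesis by (simp add: exponential_sqrt_moments)
qed

lemma sig_kernel_beta_mixture:
  assumes "m > 0"
  shows "sig_kernel (\<lambda>k. Gamma (m + 1) * Gamma (real k + 1) / Gamma (real k + m + 1)) \<gamma> \<sigma> a s t
    = (\<integral>p. sig_kernel (\<lambda>k. p ^ k) \<gamma> \<sigma> a s t \<partial>density lborel (beta_density 1 m))"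
proof -
  have "sig_kernel (\<lambda>k. \<integral>p. p ^ k \<partial>density lborel (beta_density 1 m)) \<gamma> \<sigma> a s t
      = (\<integral>p. sig_kernel (\<lambda>k. p ^ k) \<gamma> \<sigma> a s t \<partial>density lborel (beta_density 1 m))"
  proof (rule sig_kernel_mixture)
    show "(\<lambda>p. p) \<in> borel_measurable (density lborel (beta_density 1 m))" by measurable
    show "AE p in density lborel (beta_density 1 m). 0 \<le> p"
      by (subst AE_density) (auto simp: beta_density_def)
    show "(\<integral>p. p ^ k \<partial>density lborel (beta_density 1 m)) \<le> fact k" for k
      using order_trans[OF Beta_ratio_le_1[OF assms] fact_ge_1] by (simp add: beta_moments[OF assms])
  qed (simp add: beta_moments[OF assms])
  then show ?thesis by (simp add: beta_moments[OF assms] Beta_ratio_eq_Gamma[OF assms])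
qed

end

theorem mainTheorem7:
  fixes \<gamma> \<sigma> :: "real \<Rightarrow> 'a::euclidean_space" and a b s t :: real
  assumes "a \<le> b"
    and "continuous_on {a..b} \<gamma>" and "continuous_on {a..b} \<sigma>"
    and "bounded_variation_on a b \<gamma>" and "bounded_variation_on a b \<sigma>"
    and "s \<in> {a..b}" and "t \<in> {a..b}"
  shows
    "(sig_kernel (\<lambda>k. Gamma (real k / 2 + 1)) \<gamma> \<sigma> a s t
       = (\<integral>p. sig_kernel (\<lambda>_. 1) (rescale_path (sqrt p) \<gamma>) \<sigma> a s t
              \<partial>(density lborel (exponential_density 1)))
     \<and> sig_kernel (\<lambda>k. Gamma (real k / 2 + 1)) \<gamma> \<sigma> a s t
       = (\<integral>p. sig_kernel (\<lambda>_. 1) \<gamma> (rescale_path (sqrt p) \<sigma>) a s t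
              \<partial>(density lborel (exponential_density 1))))
     \<and> (\<forall>m::real. m > 0 \<longrightarrow>
       sig_kernel (\<lambda>k. Gamma (m + 1) * Gamma (real k + 1) / Gamma (real k + m + 1)) \<gamma> \<sigma> a s t
         = (\<integral>p. sig_kernel (\<lambda>_. 1) (rescale_path p \<gamma>) \<sigma> a s t
              \<partial>(density lborel (beta_density 1 m)))
       \<and> sig_kernel (\<lambda>k. Gamma (m + 1) * Gamma (real k + 1) / Gamma (real k + m + 1)) \<gamma> \<sigma> a s t
         = (\<integral>p. sig_kernel (\<lambda>_. 1) \<gamma> (rescale_path p \<sigma>) a s t
              \<partial>(density lborel (beta_density 1 m))))"
  unfolding sig_kernel_rescale_path_left[OF assms(1,2,4,6)]
    sig_kernel_rescale_path_right[OF assms(1,3,5,7)]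
  using sig_kernel_exponential_mixture[OF assms] sig_kernel_beta_mixture[OF assms] by simp

end
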